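(* Let $t\ge3$, let $\mathcal C$ be an $(n,k,r,t)$-SLRC, let $G$ be a minimal repair graph of $\mathcal C$, and let $v$ be a source of $G$ with $\mathrm{Out}(v)=\{v_1,v_2\}$, $v_1\neq v_2$. Then: 1) $\mathrm{Out}(v_1)\ne\emptyset$ or $\mathrm{Out}(v_2)\ne\emptyset$; 2) if $\{v_1\}=\mathrm{Out}(u)$ for some source $u$, then $\mathrm{Out}(v_2)\ne\emptyset$; 3) if $\{v_1\}=\mathrm{Out}(u)$ for some source $u$, then $|\mathrm{Out}(w)|\ge2$ for every source $w\in\mathrm{In}(v_2)$.
   Context: For an $[n,k]$ linear code $\mathcal C$ over a finite field $\mathbb F$, a recovering set of $i\in[n]$ is a set $R\subseteq[n]\setminus\{i\}$ with nonzero $a_j\in\mathbb F$ such that $x_i=\sum_{j\in R}a_jx_j$ for all $x\in\mathcal C$; standing assumption: recovering sets have size $2\le|R|\le r<k$. $\mathcal C$ is an $(n,k,r,t)$-SLRC if every $E\subseteq[n]$ with $|E|\le t$ can be indexed $\{i_1,\dots,i_{|E|}\}$ so that each $i_\ell$ has a recovering set $R_\ell\subseteq([n]\setminus E)\cup\{i_1,\dots,i_{\ell-1}\}$. A repair graph of $\mathcal C$ is a directed acyclic graph on vertex set $[n]$ such that for every vertex $i$ with nonempty in-neighbourhood $\mathrm{In}(i)$, $\mathrm{In}(i)$ is a recovering set of $i$. A source is a vertex with no in-neighbours. A minimal repair graph is a repair graph with the minimum number of sources among all repair graphs of $\mathcal C$. $\mathrm{Out}(v)$ denotes the set of out-neighbours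 of $v$. *)

theory Defs
  imports Complex_Main "HOL-Library.Function_Algebras"
begin

text \<open>Coordinates are indexed by [n] = {0..<n}. Codewords are functions nat => F
  vanishing outside [n]. Scalar multiplication is pointwise.\<close>

definition cscale :: "'a::field \<Rightarrow> (nat \<Rightarrow> 'a) \<Rightarrow> (nat \<Rightarrow> 'a)" where
  "cscale c x = (\<lambda>i. c * x i)"

definition linear_code :: "nat \<Rightarrow> nat \<Rightarrow> (nat \<Rightarrow> 'a::{field,finite}) set \<Rightarrow> bool" where
  "linear_code n k C \<longleftrightarrow>
     C \<subseteq> {x. \<forall>i. n \<le> i \<longrightarrow> x i = 0} \<and>
     module.subspace cscale C \<and>
     vector_space.dim cscale C = k"

definition recovering_set ::
  "nat \<Rightarrow> nat \<Rightarrow> (nat \<Rightarrow> 'a::field) set \<Rightarrow> nat \<Rightarrow> nat set \<Rightarrow> bool" where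
  "recovering_set n r C i R \<longleftrightarrow>
     R \<subseteq> {0..<n} - {i} \<and> 2 \<le> card R \<and> card R \<le> r \<and>
     (\<exists>a. (\<forall>j\<in>R. a j \<noteq> 0) \<and> (\<forall>x\<in>C. x i = (\<Sum>j\<in>R. a j * x j)))"

definition SLRC :: "nat \<Rightarrow> nat \<Rightarrow> nat \<Rightarrow> nat \<Rightarrow> (nat \<Rightarrow> 'a::{field,finite}) set \<Rightarrow> bool" where
  "SLRC n k r t C \<longleftrightarrow>
     linear_code n k C \<and> r < k \<and>
     (\<forall>E. E \<subseteq> {0..<n} \<and> card E \<le> t \<longrightarrow>
        (\<exists>is. distinct is \<and> set is = E \<and>
           (\<forall>l < length is. \<exists>R. recovering_set n r C (is ! l) R \<and>
                R \<subseteq> ({0..<n} - E) \<union> set (take l is))))"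

definition In_nb :: "(nat \<times> nat) set \<Rightarrow> nat \<Rightarrow> nat set" where
  "In_nb G v = {u. (u, v) \<in> G}"

definition Out_nb :: "(nat \<times> nat) set \<Rightarrow> nat \<Rightarrow> nat set" where
  "Out_nb G v = {w. (v, w) \<in> G}"

definition repair_graph :: "nat \<Rightarrow> nat \<Rightarrow> (nat \<Rightarrow> 'a::field) set \<Rightarrow> (nat \<times> nat) set \<Rightarrow> bool" where
  "repair_graph n r C G \<longleftrightarrow>
     G \<subseteq> {0..<n} \<times> {0..<n} \<and> acyclic G \<and>
     (\<forall>i\<in>{0..<n}. In_nb G i \<noteq> {} \<longrightarrow> recovering_set n r C i (In_nb G i))"

definition sources :: "nat \<Rightarrow> (nat \<times> nat) set \<Rightarrow> nat set" where
  "sources n G = {v \<in> {0..<n}. In_nb G v = {}}"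

definition minimal_repair_graph ::
  "nat \<Rightarrow> nat \<Rightarrow> (nat \<Rightarrow> 'a::field) set \<Rightarrow> (nat \<times> nat) set \<Rightarrow> bool" where
  "minimal_repair_graph n r C G \<longleftrightarrow>
     repair_graph n r C G \<and>
     (\<forall>G'. repair_graph n r C G' \<longrightarrow> card (sources n G) \<le> card (sources n G'))"

end

theory Submission
  imports Defs
begin

text \<open>A set E of at most t coordinates that contains a source of a minimal repair graph G and
  is closed under out-edges cannot exist: the SLRC property repairs E in some order from coordinates
  outside E and from earlier elements of E, and replacing the in-edges of E by these repairs gives
  a repair graph with fewer sources. Part 1 applies this to E = {v, v1, v2}. Reversing the edge
  u \<rightarrow> v1 of a source u with Out(u) = {v1} yields another minimal repair graph, in which u is a
  sink child of v; a sink v2 (part 2), or a source w with Out(w) = {v2} whose edge is reversed as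
  well (part 3), then produces such a closed set of size 3 again.\<close>

lemma acyclic_if_rank_increasing:
  fixes f :: "'a \<Rightarrow> 'b::order"
  assumes "acyclic G"
    and outside: "\<And>a b. (a, b) \<in> H \<Longrightarrow> b \<notin> E \<Longrightarrow> (a, b) \<in> G"
    and inside: "\<And>a b. (a, b) \<in> H \<Longrightarrow> a \<in> E \<Longrightarrow> b \<in> E \<and> f a < f b"
  shows "acyclic H"
proof -
  have path: "(y \<in> E \<and> (x \<in> E \<longrightarrow> f x < f y)) \<or> (x \<notin> E \<and> y \<notin> E \<and> (x, y) \<in> G\<^sup>+)"
    if "(x, y) \<in> H\<^sup>+" for x y
    using that
  proof (induction rule: trancl_induct)
    case (base y)
    then show ?case using outside inside by blast
  next
    case (step y z)
    show ?case
    proof (cases "z \<in> E")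
      case True
      then show ?thesis using step inside by fastforce
    next
      case False
      then have "y \<notin> E" and "(y, z) \<in> G" using step outside inside by blast+
      then show ?thesis using step False by (meson trancl_into_trancl)
    qed
  qed
  show ?thesis
    using path \<open>acyclic G\<close> by (auto simp: acyclic_def)
qed

lemma repair_graph_irrefl: "repair_graph n r C G \<Longrightarrow> (x, x) \<notin> G"
  unfolding repair_graph_def acyclic_def by blast

lemma Out_nb_subset: "repair_graph n r C G \<Longrightarrow> Out_nb G x \<subseteq> {0..<n}"
  unfolding repair_graph_def Out_nb_def by blast

lemma Out_nb_disjoint_sources: "Out_nb G x \<inter> sources n G = {}"
  by (auto simp: Out_nb_def In_nb_def sources_def)

lemma SLRC_ranked_recovering_sets:
  fixes C :: "(nat \<Rightarrow> 'a::{field,finite}) set"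
  assumes "SLRC n k r t C" and "E \<subseteq> {0..<n}" and "card E \<le> t"
  obtains R and f :: "nat \<Rightarrow> nat" where
    "\<And>x. x \<in> E \<Longrightarrow> recovering_set n r C x (R x) \<and> R x \<subseteq> ({0..<n} - E) \<union> {a \<in> E. f a < f x}"
proof -
  obtain xs where xs: "distinct xs" "set xs = E" and
    "\<forall>l < length xs. \<exists>R. recovering_set n r C (xs ! l) R \<and> R \<subseteq> ({0..<n} - E) \<union> set (take l xs)"
    using assms unfolding SLRC_def by blast
  then obtain Rl where Rl: "\<And>l. l < length xs \<Longrightarrow>
      recovering_set n r C (xs ! l) (Rl l) \<and> Rl l \<subseteq> ({0..<n} - E) \<union> set (take l xs)"
    by metis
  define f where "f = inv_into {..<length xs} ((!) xs)"
  have inj: "inj_on ((!) xs) {..<length xs}" using xs(1) by (simp add: inj_on_nth)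
  have pos: "f x < length xs \<and> xs ! f x = x" if "x \<in> E" for x
    using that xs(2) inv_into_f_f[OF inj] by (auto simp: f_def set_conv_nth)
  have earlier: "f a < l" if a: "a \<in> set (take l xs)" for a l
  proof -
    obtain j where "j < l" "j < length xs" "xs ! j = a"
      using a by (auto simp: in_set_conv_nth)
    then show ?thesis using inv_into_f_f[OF inj] by (auto simp: f_def)
  qed
  show thesis
  proof
    fix x assume "x \<in> E"
    then show "recovering_set n r C x (Rl (f x)) \<and> Rl (f x) \<subseteq> ({0..<n} - E) \<union> {a \<in> E. f a < f x}"
      using Rl[of "f x"] pos earlier xs(2) by (fastforce dest: in_set_takeD)
  qed
qed

lemma repair_graph_reroute_closed_set:
  fixes f :: "nat \<Rightarrow> 'b::order"
  assumes rg: "repair_graph n r C G" and E: "E \<subseteq> {0..<n}"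
    and closed: "\<forall>x\<in>E. Out_nb G x \<subseteq> E"
    and R: "\<And>x. x \<in> E \<Longrightarrow> recovering_set n r C x (R x) \<and> R x \<subseteq> ({0..<n} - E) \<union> {a \<in> E. f a < f x}"
  obtains H where "repair_graph n r C H" and "sources n H = sources n G - E"
proof
  define H where "H = {(a, b). (a, b) \<in> G \<and> b \<notin> E} \<union> {(a, x). x \<in> E \<and> a \<in> R x}"
  have In_H: "In_nb H i = (if i \<in> E then R i else In_nb G i)" for i
    by (auto simp: H_def In_nb_def)
  have R_nonempty: "R x \<noteq> {}" if "x \<in> E" for x
    using R[OF that] by (auto simp: recovering_set_def)
  have "H \<subseteq> {0..<n} \<times> {0..<n}"
    using rg E R unfolding H_def repair_graph_def recovering_set_def by blast
  moreover have "acyclic H"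
  proof (rule acyclic_if_rank_increasing[where G = G and E = E and f = f])
    show "acyclic G" using rg by (simp add: repair_graph_def)
  next
    fix a b assume "(a, b) \<in> H" "b \<notin> E"
    then show "(a, b) \<in> G" by (simp add: H_def)
  next
    fix a b assume "(a, b) \<in> H" "a \<in> E"
    then show "b \<in> E \<and> f a < f b"
      using closed R by (auto simp: H_def Out_nb_def)
  qed
  moreover have "recovering_set n r C i (In_nb H i)" if "i \<in> {0..<n}" "In_nb H i \<noteq> {}" for i
    using that R rg In_H unfolding repair_graph_def by (cases "i \<in> E") auto
  ultimately show "repair_graph n r C H"
    by (simp add: repair_graph_def)
  show "sources n H = sources n G - E"
    using In_H R_nonempty by (auto simp: sources_def)
qed

lemma out_closed_set_has_no_source:
  fixes C :: "(nat \<Rightarrow> 'a::{field,finite}) set"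
  assumes "SLRC n k r t C" and min: "minimal_repair_graph n r C G"
    and E: "E \<subseteq> {0..<n}" "card E \<le> t" and closed: "\<forall>x\<in>E. Out_nb G x \<subseteq> E"
  shows "E \<inter> sources n G = {}"
proof (rule ccontr)
  assume "E \<inter> sources n G \<noteq> {}"
  have rg: "repair_graph n r C G" using min by (simp add: minimal_repair_graph_def)
  obtain R and f :: "nat \<Rightarrow> nat" where
    "\<And>x. x \<in> E \<Longrightarrow> recovering_set n r C x (R x) \<and> R x \<subseteq> ({0..<n} - E) \<union> {a \<in> E. f a < f x}"
    using SLRC_ranked_recovering_sets[OF assms(1) E] by blast
  then obtain H where H: "repair_graph n r C H" "sources n H = sources n G - E"
    using repair_graph_reroute_closed_set[OF rg E(1) closed] by blast
  have "card (sources n H) < card (sources n G)"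
    using H(2) \<open>E \<inter> sources n G \<noteq> {}\<close> by (intro psubset_card_mono) (auto simp: sources_def)
  moreover have "card (sources n G) \<le> card (sources n H)"
    using min H(1) by (simp add: minimal_repair_graph_def)
  ultimately show False by simp
qed

lemma source_has_non_sink_out_nb:
  fixes C :: "(nat \<Rightarrow> 'a::{field,finite}) set"
  assumes slrc: "SLRC n k r t C" and "3 \<le> t" and min: "minimal_repair_graph n r C G"
    and v: "v \<in> sources n G" and deg: "card (Out_nb G v) \<le> 2"
  shows "\<exists>x\<in>Out_nb G v. Out_nb G x \<noteq> {}"
proof (rule ccontr)
  assume sinks: "\<not> ?thesis"
  have rg: "repair_graph n r C G" using min by (simp add: minimal_repair_graph_def)
  let ?E = "insert v (Out_nb G v)"
  have "?E \<subseteq> {0..<n}" using v Out_nb_subset[OF rg] by (auto simp: sources_def)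
  moreover have "card ?E \<le> t"
    using card_insert_le_m1[of 3 "Out_nb G v" v] deg \<open>3 \<le> t\<close> by simp
  moreover have "\<forall>x\<in>?E. Out_nb G x \<subseteq> ?E" using sinks by auto
  ultimately have "?E \<inter> sources n G = {}"
    by (rule out_closed_set_has_no_source[OF slrc min])
  with v show False by blast
qed

lemma recovering_set_exchange:
  assumes rec: "recovering_set n r C y R" and "u \<in> R" and "y \<notin> R" and "y < n"
  shows "recovering_set n r C u (insert y (R - {u}))"
proof -
  have R: "R \<subseteq> {0..<n} - {y}" "2 \<le> card R" "card R \<le> r"
    using rec by (auto simp: recovering_set_def)
  have "finite R" using R(1) finite_subset by blast
  obtain a where a: "\<forall>j\<in>R. a j \<noteq> 0" "\<forall>x\<in>C. x y = (\<Sum>j\<in>R. a j * x j)"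
    using rec by (auto simp: recovering_set_def)
  have "a u \<noteq> 0" using a(1) \<open>u \<in> R\<close> by blast
  define b where "b = (\<lambda>j. if j = y then 1 / a u else - a j / a u)"
  have "card (insert y (R - {u})) = card R"
    using \<open>finite R\<close> \<open>u \<in> R\<close> \<open>y \<notin> R\<close> by (metis card_Suc_Diff1 card_insert_disjoint finite_Diff DiffD1)
  moreover have "insert y (R - {u}) \<subseteq> {0..<n} - {u}"
    using R(1) \<open>y < n\<close> \<open>u \<in> R\<close> \<open>y \<notin> R\<close> by auto
  moreover have "\<forall>j\<in>insert y (R - {u}). b j \<noteq> 0"
    using a(1) \<open>a u \<noteq> 0\<close> by (auto simp: b_def)
  moreover have "x u = (\<Sum>j\<in>insert y (R - {u}). b j * x j)" if "x \<in> C" for x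
  proof -
    have "x y = a u * x u + (\<Sum>j\<in>R - {u}. a j * x j)"
      using a(2) that \<open>finite R\<close> \<open>u \<in> R\<close> by (simp add: sum.remove)
    moreover have "(\<Sum>j\<in>R - {u}. b j * x j) = - (\<Sum>j\<in>R - {u}. a j * x j) / a u"
      using \<open>y \<notin> R\<close>
      by (simp add: b_def sum_divide_distrib flip: sum_negf, intro sum.cong) auto
    ultimately show ?thesis
      using \<open>finite R\<close> \<open>y \<notin> R\<close> \<open>a u \<noteq> 0\<close> by (simp add: b_def field_simps)
  qed
  ultimately show ?thesis
    using R by (auto simp: recovering_set_def)
qed

text \<open>Reversal of the edge u \<rightarrow> y out of a source u: the other in-neighbours of y then repair u,
  which is possible because u occurs with a nonzero coefficient in the repair of y.\<close>

definition flip_edge :: "(nat \<times> nat) set \<Rightarrow> nat \<Rightarrow> nat \<Rightarrow> (nat \<times> nat) set" where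
  "flip_edge G u y =
     {(a, b). (a, b) \<in> G \<and> b \<noteq> y} \<union> {(a, u) | a. (a, y) \<in> G \<and> a \<noteq> u} \<union> {(y, u)}"

lemma Out_nb_flip_edge:
  "x \<noteq> u \<Longrightarrow> x \<noteq> y \<Longrightarrow> Out_nb (flip_edge G u y) x = (\<lambda>b. if b = y then u else b) ` Out_nb G x"
  by (auto simp: flip_edge_def Out_nb_def image_iff)

lemma Out_nb_flip_edge_source: "u \<noteq> y \<Longrightarrow> Out_nb (flip_edge G u y) u = Out_nb G u - {y}"
  by (auto simp: flip_edge_def Out_nb_def)

lemma In_nb_flip_edge:
  assumes "In_nb G u = {}" and "u \<noteq> y"
  shows "In_nb (flip_edge G u y) i =
    (if i = y then {} else if i = u then insert y (In_nb G y - {u}) else In_nb G i)"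
  using assms by (auto simp: flip_edge_def In_nb_def)

context
  fixes n r :: nat and C :: "(nat \<Rightarrow> 'a::field) set" and G :: "(nat \<times> nat) set" and u y :: nat
  assumes rg: "repair_graph n r C G" and u: "u \<in> sources n G" and out_u: "Out_nb G u = {y}"
begin

private lemma flip_edge_basics: "(u, y) \<in> G" "u < n" "y < n" "u \<noteq> y" "In_nb G u = {}"
  using rg u out_u repair_graph_irrefl[OF rg, of u]
  by (auto simp: Out_nb_def sources_def repair_graph_def)

lemma sources_flip_edge: "sources n (flip_edge G u y) = insert y (sources n G - {u})"
  using flip_edge_basics In_nb_flip_edge[of G u y] by (auto simp: sources_def In_nb_def)

lemma repair_graph_flip_edge: "repair_graph n r C (flip_edge G u y)"
proof -
  have "flip_edge G u y \<subseteq> {0..<n} \<times> {0..<n}"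
    using rg flip_edge_basics unfolding repair_graph_def flip_edge_def by auto
  moreover have "acyclic (flip_edge G u y)"
  proof (rule acyclic_if_rank_increasing[where G = G and E = "{u}" and f = id])
    show "acyclic G" using rg by (simp add: repair_graph_def)
  next
    fix a b assume "(a, b) \<in> flip_edge G u y" "b \<notin> {u}"
    then show "(a, b) \<in> G" by (auto simp: flip_edge_def)
  next
    fix a b assume "(a, b) \<in> flip_edge G u y" "a \<in> {u}"
    then show "b \<in> {u} \<and> id a < id b"
      using Out_nb_flip_edge_source[of u y G] flip_edge_basics out_u by (auto simp: Out_nb_def)
  qed
  moreover have "recovering_set n r C u (insert y (In_nb G y - {u}))"
  proof (rule recovering_set_exchange)
    show "recovering_set n r C y (In_nb G y)"
      using rg flip_edge_basics unfolding repair_graph_def In_nb_def by auto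
    show "u \<in> In_nb G y" "y \<notin> In_nb G y" "y < n"
      using flip_edge_basics repair_graph_irrefl[OF rg] by (auto simp: In_nb_def)
  qed
  ultimately show ?thesis
    using rg flip_edge_basics In_nb_flip_edge[of G u y] unfolding repair_graph_def by auto
qed

lemma minimal_repair_graph_flip_edge:
  assumes "minimal_repair_graph n r C G"
  shows "minimal_repair_graph n r C (flip_edge G u y)"
proof -
  have "y \<notin> sources n G" using flip_edge_basics by (auto simp: sources_def In_nb_def)
  moreover have "finite (sources n G)" by (simp add: sources_def)
  ultimately have "card (sources n (flip_edge G u y)) = card (sources n G)"
    using sources_flip_edge u by (metis card_Suc_Diff1 card_insert_disjoint finite_Diff DiffD1)
  then show ?thesis
    using assms repair_graph_flip_edge by (simp add: minimal_repair_graph_def)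
qed

end

lemma flip_edge_pendant_sibling:
  assumes min: "minimal_repair_graph n r C G"
    and v: "v \<in> sources n G" "Out_nb G v = {v1, v2}" "v1 \<noteq> v2"
    and u: "u \<in> sources n G" "Out_nb G u = {v1}"
  shows "minimal_repair_graph n r C (flip_edge G u v1)"
    and "v \<in> sources n (flip_edge G u v1)"
    and "Out_nb (flip_edge G u v1) v = {v2, u}"
    and "Out_nb (flip_edge G u v1) u = {}"
    and "u \<noteq> v2"
proof -
  have rg: "repair_graph n r C G" using min by (simp add: minimal_repair_graph_def)
  have "v1 \<notin> sources n G" "v2 \<notin> sources n G"
    using Out_nb_disjoint_sources[of G v n] v by auto
  moreover have "u \<noteq> v" using u v by auto
  ultimately have distinct: "u \<noteq> v" "u \<noteq> v1" "u \<noteq> v2" "v \<noteq> v1" "v \<noteq> v2"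
    using u v by auto
  show "minimal_repair_graph n r C (flip_edge G u v1)"
    by (rule minimal_repair_graph_flip_edge[OF rg u min])
  show "v \<in> sources n (flip_edge G u v1)"
    using sources_flip_edge[OF rg u] v distinct by simp
  show "Out_nb (flip_edge G u v1) v = {v2, u}"
    using Out_nb_flip_edge[of v u v1 G] v distinct by auto
  show "Out_nb (flip_edge G u v1) u = {}"
    using Out_nb_flip_edge_source[of u v1 G] u distinct by simp
  show "u \<noteq> v2" by (fact distinct)
qed

lemma pendant_sibling_not_sink:
  fixes C :: "(nat \<Rightarrow> 'a::{field,finite}) set"
  assumes slrc: "SLRC n k r t C" and t: "3 \<le> t" and min: "minimal_repair_graph n r C G"
    and v: "v \<in> sources n G" "Out_nb G v = {v1, v2}" "v1 \<noteq> v2"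
    and u: "u \<in> sources n G" "Out_nb G u = {v1}"
  shows "Out_nb G v2 \<noteq> {}"
proof -
  note G1 = flip_edge_pendant_sibling[OF min v u]
  have "v2 \<notin> sources n G" using Out_nb_disjoint_sources[of G v n] v by auto
  then have "v2 \<noteq> u" "v2 \<noteq> v1" using u v by auto
  have "card {v2, u} \<le> 2" by (simp add: card_insert_if)
  then have "Out_nb (flip_edge G u v1) v2 \<noteq> {}"
    using source_has_non_sink_out_nb[OF slrc t G1(1,2)] G1(3,4) by auto
  then show ?thesis
    using Out_nb_flip_edge[OF \<open>v2 \<noteq> u\<close> \<open>v2 \<noteq> v1\<close>] by auto
qed

lemma pendant_sibling_has_no_pendant_source_parent:
  fixes C :: "(nat \<Rightarrow> 'a::{field,finite}) set"
  assumes slrc: "SLRC n k r t C" and t: "3 \<le> t" and min: "minimal_repair_graph n r C G"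
    and v: "v \<in> sources n G" "Out_nb G v = {v1, v2}" "v1 \<noteq> v2"
    and u: "u \<in> sources n G" "Out_nb G u = {v1}"
    and w: "w \<in> sources n G" "Out_nb G w = {v2}"
  shows False
proof -
  \<comment> \<open>After flipping u \<rightarrow> v1, the source w is a pendant parent of v2 and u is a sink sibling of v2.\<close>
  note G1 = flip_edge_pendant_sibling[OF min v u]
  have "v1 \<notin> sources n G" using Out_nb_disjoint_sources[of G v n] v by auto
  then have "w \<noteq> u" "w \<noteq> v1" using u w v(3) by auto
  have rg: "repair_graph n r C G" using min by (simp add: minimal_repair_graph_def)
  have "w \<in> sources n (flip_edge G u v1)"
    using sources_flip_edge[OF rg u] w \<open>w \<noteq> u\<close> by simp
  moreover have "Out_nb (flip_edge G u v1) w = {v2}"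
    using Out_nb_flip_edge[OF \<open>w \<noteq> u\<close> \<open>w \<noteq> v1\<close>] w v(3) by auto
  ultimately have "Out_nb (flip_edge G u v1) u \<noteq> {}"
    using pendant_sibling_not_sink[OF slrc t G1(1,2,3)] G1(5) by blast
  with G1(4) show False by simp
qed

theorem corollary2:
  fixes C :: "(nat \<Rightarrow> 'a::{field,finite}) set"
    and n k r t :: nat and G :: "(nat \<times> nat) set" and v v1 v2 :: nat
  assumes "t \<ge> 3"
    and "SLRC n k r t C"
    and "minimal_repair_graph n r C G"
    and "v \<in> sources n G"
    and "Out_nb G v = {v1, v2}" and "v1 \<noteq> v2"
  shows "(Out_nb G v1 \<noteq> {} \<or> Out_nb G v2 \<noteq> {})
    \<and> ((\<exists>u\<in>sources n G. Out_nb G u = {v1}) \<longrightarrow> Out_nb G v2 \<noteq> {})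
    \<and> ((\<exists>u\<in>sources n G. Out_nb G u = {v1}) \<longrightarrow>
         (\<forall>w\<in>In_nb G v2. w \<in> sources n G \<longrightarrow> 2 \<le> card (Out_nb G w)))"
proof -
  have rg: "repair_graph n r C G" using assms(3) by (simp add: minimal_repair_graph_def)
  have "card {v1, v2} \<le> 2" by (simp add: card_insert_if)
  then have part1: "Out_nb G v1 \<noteq> {} \<or> Out_nb G v2 \<noteq> {}"
    using source_has_non_sink_out_nb[OF assms(2,1,3,4)] assms(5) by auto
  have part2: "Out_nb G v2 \<noteq> {}" if "u \<in> sources n G" "Out_nb G u = {v1}" for u
    by (rule pendant_sibling_not_sink[OF assms(2,1,3-6) that])
  have part3: "2 \<le> card (Out_nb G w)"
    if u: "u \<in> sources n G" "Out_nb G u = {v1}" and w: "w \<in> In_nb G v2" "w \<in> sources n G" for u w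
  proof -
    have "finite (Out_nb G w)" using finite_subset[OF Out_nb_subset[OF rg]] by blast
    moreover have "v2 \<in> Out_nb G w" using w(1) by (simp add: In_nb_def Out_nb_def)
    moreover have "Out_nb G w \<noteq> {v2}"
      using pendant_sibling_has_no_pendant_source_parent[OF assms(2,1,3-6) u w(2)] by blast
    ultimately have "card (Out_nb G w) \<noteq> 0" "card (Out_nb G w) \<noteq> 1"
      by (auto simp: card_1_singleton_iff)
    then show ?thesis by linarith
  qed
  show ?thesis using part1 part2 part3 by blast
qed

end
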